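(* Let $P$ be a finite poset and $R$ a weakly-consistent restriction function on $P$. Then the poset $\Gamma'(P,R)$ is isomorphic to the dual of the poset of meet-irreducible elements of the lattice $\mathrm{WInc}^R(P)$. Consequently, the order ideals of $\Gamma'(P,R)$ are in bijection with $\mathrm{WInc}^R(P)$.
   Context: A restriction function assigns to each $p\in P$ a nonempty finite $R(p)\subseteq\mathbb{Z}$. It is weakly-consistent if for every cover $x\lessdot y$ in $P$, $\min R(x)\le\min R(y)$ and $\max R(x)\le\max R(y)$. $\mathrm{WInc}^R(P)$ is the set of $f:P\to\mathbb{Z}$ with $f(p)\in R(p)$ and $p_1<p_2\Rightarrow f(p_1)\le f(p_2)$, ordered pointwise (a distributive lattice with pointwise min/max). An element is meet-irreducible if it is not the top and $x=y\wedge z$ implies $x\in\{y,z\}$. $R(p)^*=R(p)\setminus\{\max R(p)\}$; $R(p)_{>k}$ is the smallest element of $R(p)$ greater than $k$; $R(p)_{\le k}$ is the largest element of $R(p)$ less than or equal to $k$. $\Gamma'(P,R)$ is the poset on $\{(p,k):p\in P,k\in R(p)^*\}$ whose order is the reflexive–transitive closure of the relation $(p_1,k_1)\lessdot(p_2,k_2)$, holding iff either (1) $p_1=p_2$ and $R(p_1)_{>k_2}=k_1$; or (2) $p_1\lessdot p_2$ in $P$, $R(p_1)_{\le k_2}=k_1$, and there is no $k\in R(p_2)$ with $k>k_2$ and $R(p_1)_{\le k}=k_1$. *)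

theory Defs
  imports Main
begin

text \<open>A finite poset is modelled as a finite carrier set P inside a type of class order,
  with the induced order. Functions P -> int are represented as total functions that are 0
  outside P (extensional).\<close>

definition covP :: "'a::order set \<Rightarrow> 'a \<Rightarrow> 'a \<Rightarrow> bool" where
  "covP P x y \<longleftrightarrow> x \<in> P \<and> y \<in> P \<and> x < y \<and> \<not> (\<exists>z\<in>P. x < z \<and> z < y)"

definition restriction_fn :: "'a set \<Rightarrow> ('a \<Rightarrow> int set) \<Rightarrow> bool" where
  "restriction_fn P R \<longleftrightarrow> (\<forall>p\<in>P. R p \<noteq> {} \<and> finite (R p))"

definition weakly_consistent :: "'a::order set \<Rightarrow> ('a \<Rightarrow> int set) \<Rightarrow> bool" where
  "weakly_consistent P R \<longleftrightarrow> restriction_fn P R \<and>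
     (\<forall>x y. covP P x y \<longrightarrow> Min (R x) \<le> Min (R y) \<and> Max (R x) \<le> Max (R y))"

definition WInc :: "'a::order set \<Rightarrow> ('a \<Rightarrow> int set) \<Rightarrow> ('a \<Rightarrow> int) set" where
  "WInc P R = {f. (\<forall>p\<in>P. f p \<in> R p) \<and> (\<forall>p1\<in>P. \<forall>p2\<in>P. p1 < p2 \<longrightarrow> f p1 \<le> f p2)
                  \<and> (\<forall>p. p \<notin> P \<longrightarrow> f p = 0)}"

definition wle :: "'a set \<Rightarrow> ('a \<Rightarrow> int) \<Rightarrow> ('a \<Rightarrow> int) \<Rightarrow> bool" where
  "wle P f g \<longleftrightarrow> (\<forall>p\<in>P. f p \<le> g p)"

definition wmeet :: "('a \<Rightarrow> int) \<Rightarrow> ('a \<Rightarrow> int) \<Rightarrow> ('a \<Rightarrow> int)" where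
  "wmeet f g = (\<lambda>p. min (f p) (g p))"

definition is_top :: "('b \<Rightarrow> 'b \<Rightarrow> bool) \<Rightarrow> 'b set \<Rightarrow> 'b \<Rightarrow> bool" where
  "is_top le L x \<longleftrightarrow> x \<in> L \<and> (\<forall>y\<in>L. le y x)"

definition meet_irreducibles :: "'a::order set \<Rightarrow> ('a \<Rightarrow> int set) \<Rightarrow> ('a \<Rightarrow> int) set" where
  "meet_irreducibles P R = {x \<in> WInc P R. \<not> is_top (wle P) (WInc P R) x \<and>
      (\<forall>y\<in>WInc P R. \<forall>z\<in>WInc P R. x = wmeet y z \<longrightarrow> x = y \<or> x = z)}"

text \<open>R(p)_{>k} = k1 and R(p)_{<=k} = k1, written out (false if no such element exists).\<close>
definition R_gt :: "('a \<Rightarrow> int set) \<Rightarrow> 'a \<Rightarrow> int \<Rightarrow> int \<Rightarrow> bool" where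
  "R_gt R p k k1 \<longleftrightarrow> k1 = Min {j \<in> R p. k < j} \<and> {j \<in> R p. k < j} \<noteq> {}"

definition R_le :: "('a \<Rightarrow> int set) \<Rightarrow> 'a \<Rightarrow> int \<Rightarrow> int \<Rightarrow> bool" where
  "R_le R p k k1 \<longleftrightarrow> k1 = Max {j \<in> R p. j \<le> k} \<and> {j \<in> R p. j \<le> k} \<noteq> {}"

definition Rstar :: "('a \<Rightarrow> int set) \<Rightarrow> 'a \<Rightarrow> int set" where
  "Rstar R p = R p - {Max (R p)}"

definition Gamma_set :: "'a set \<Rightarrow> ('a \<Rightarrow> int set) \<Rightarrow> ('a \<times> int) set" where
  "Gamma_set P R = {(p, k). p \<in> P \<and> k \<in> Rstar R p}"

definition Gamma_cov :: "'a::order set \<Rightarrow> ('a \<Rightarrow> int set) \<Rightarrow> ('a \<times> int) \<Rightarrow> ('a \<times> int) \<Rightarrow> bool" where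
  "Gamma_cov P R a b \<longleftrightarrow> (case (a, b) of ((p1, k1), (p2, k2)) \<Rightarrow>
      (p1 = p2 \<and> R_gt R p1 k2 k1) \<or>
      (covP P p1 p2 \<and> R_le R p1 k2 k1 \<and> \<not> (\<exists>k\<in>R p2. k > k2 \<and> R_le R p1 k k1)))"

definition Gamma_le :: "'a::order set \<Rightarrow> ('a \<Rightarrow> int set) \<Rightarrow> ('a \<times> int) \<Rightarrow> ('a \<times> int) \<Rightarrow> bool" where
  "Gamma_le P R a b \<longleftrightarrow>
     (a, b) \<in> {(x, y). x \<in> Gamma_set P R \<and> y \<in> Gamma_set P R \<and> Gamma_cov P R x y}\<^sup>*"

definition order_ideals :: "('b \<Rightarrow> 'b \<Rightarrow> bool) \<Rightarrow> 'b set \<Rightarrow> 'b set set" where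
  "order_ideals le S = {I. I \<subseteq> S \<and> (\<forall>x\<in>I. \<forall>y\<in>S. le y x \<longrightarrow> y \<in> I)}"

end

theory Submission
  imports Defs
begin

text \<open>The map $f \mapsto \{(p,k) \in \Gamma'(P,R) : f(p) \le k\}$ is an order-reversing bijection
  from $\mathrm{WInc}^R(P)$ onto the order ideals of $\Gamma'(P,R)$: covers of type (1) chain each
  fibre $\{p\} \times R(p)^*$ with larger values lower, covers of type (2) encode monotonicity
  along the covers of $P$, and weak consistency is what makes the inverse map
  $I \mapsto (p \mapsto \min (\{k : (p,k) \in I\} \cup \{\max R(p)\}))$ monotone.
  Pointwise meets correspond to unions of ideals, so the meet-irreducible functions correspond
  to the union-irreducible ideals, which in a finite poset are the principal ones; sending $a$
  to the function of its principal ideal is the required anti-isomorphism.\<close>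

definition principal_ideal :: "('b \<Rightarrow> 'b \<Rightarrow> bool) \<Rightarrow> 'b set \<Rightarrow> 'b \<Rightarrow> 'b set" where
  "principal_ideal le S a = {b \<in> S. le b a}"

definition union_irreducible :: "('b \<Rightarrow> 'b \<Rightarrow> bool) \<Rightarrow> 'b set \<Rightarrow> 'b set \<Rightarrow> bool" where
  "union_irreducible le S I \<longleftrightarrow> I \<in> order_ideals le S \<and> I \<noteq> {} \<and>
     (\<forall>J\<in>order_ideals le S. \<forall>K\<in>order_ideals le S. I = J \<union> K \<longrightarrow> I = J \<or> I = K)"

lemma order_idealsI:
  "I \<subseteq> S \<Longrightarrow> (\<And>x y. x \<in> I \<Longrightarrow> y \<in> S \<Longrightarrow> le y x \<Longrightarrow> y \<in> I) \<Longrightarrow> I \<in> order_ideals le S"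
  unfolding order_ideals_def by blast

lemma order_idealsD:
  "I \<in> order_ideals le S \<Longrightarrow> x \<in> I \<Longrightarrow> y \<in> S \<Longrightarrow> le y x \<Longrightarrow> y \<in> I"
  unfolding order_ideals_def by blast

lemma order_ideals_subset: "I \<in> order_ideals le S \<Longrightarrow> I \<subseteq> S"
  unfolding order_ideals_def by blast

lemma empty_in_order_ideals: "{} \<in> order_ideals le S"
  unfolding order_ideals_def by blast

locale finite_poset_on =
  fixes S :: "'b set" and le :: "'b \<Rightarrow> 'b \<Rightarrow> bool"
  assumes finite_carrier: "finite S"
    and le_refl_on: "x \<in> S \<Longrightarrow> le x x"
    and le_trans_on: "x \<in> S \<Longrightarrow> y \<in> S \<Longrightarrow> z \<in> S \<Longrightarrow> le x y \<Longrightarrow> le y z \<Longrightarrow> le x z"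
    and le_antisym_on: "x \<in> S \<Longrightarrow> y \<in> S \<Longrightarrow> le x y \<Longrightarrow> le y x \<Longrightarrow> x = y"
begin

lemma principal_ideal_in_order_ideals: "a \<in> S \<Longrightarrow> principal_ideal le S a \<in> order_ideals le S"
  unfolding principal_ideal_def by (rule order_idealsI) (use le_trans_on in blast)+

lemma self_in_principal_ideal: "a \<in> S \<Longrightarrow> a \<in> principal_ideal le S a"
  unfolding principal_ideal_def using le_refl_on by blast

lemma principal_ideal_subset_iff:
  "a \<in> S \<Longrightarrow> b \<in> S \<Longrightarrow> principal_ideal le S a \<subseteq> principal_ideal le S b \<longleftrightarrow> le a b"
  unfolding principal_ideal_def using le_refl_on le_trans_on[of _ a b] by blast

lemma inj_on_principal_ideal: "inj_on (principal_ideal le S) S"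
proof (rule inj_onI)
  fix a b assume a: "a \<in> S" and b: "b \<in> S"
    and eq: "principal_ideal le S a = principal_ideal le S b"
  have "le a b" "le b a"
    using eq principal_ideal_subset_iff[OF a b] principal_ideal_subset_iff[OF b a] by simp_all
  then show "a = b" using le_antisym_on[OF a b] by simp
qed

lemma principal_ideal_subset_ideal:
  "I \<in> order_ideals le S \<Longrightarrow> a \<in> I \<Longrightarrow> principal_ideal le S a \<subseteq> I"
  unfolding principal_ideal_def using order_idealsD by fast

lemma order_ideal_remove_maximal:
  assumes I: "I \<in> order_ideals le S" and "I \<noteq> {}"
  obtains m where "m \<in> I" and "I - {m} \<in> order_ideals le S"
proof -
  have IS: "I \<subseteq> S" using order_ideals_subset[OF I] .
  have "finite (principal_ideal le S ` I)"
    using finite_subset[OF IS finite_carrier] by simp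
  then obtain M where "M \<in> principal_ideal le S ` I"
    and M_max: "\<forall>B \<in> principal_ideal le S ` I. M \<subseteq> B \<longrightarrow> M = B"
    using finite_has_maximal \<open>I \<noteq> {}\<close> by (metis image_is_empty)
  then obtain m where m: "m \<in> I" and M: "M = principal_ideal le S m" by blast
  have mS: "m \<in> S" using m IS by blast
  have m_max: "u = m" if u: "u \<in> I" and mu: "le m u" for u
  proof -
    have uS: "u \<in> S" using u IS by blast
    have "principal_ideal le S m = principal_ideal le S u"
      using M_max u M principal_ideal_subset_iff[OF mS uS] mu by blast
    then have "le u m" using principal_ideal_subset_iff[OF uS mS] by simp
    then show "u = m" using le_antisym_on[OF uS mS _ mu] by simp
  qed
  have "I - {m} \<in> order_ideals le S"
  proof (rule order_idealsI)
    show "I - {m} \<subseteq> S" using IS by blast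
  next
    fix x y assume x: "x \<in> I - {m}" and y: "y \<in> S" and yx: "le y x"
    have "y \<in> I" using order_idealsD[OF I _ y yx] x by blast
    moreover have "y \<noteq> m" using m_max[of x] x yx by blast
    ultimately show "y \<in> I - {m}" by blast
  qed
  with m that show thesis by blast
qed

lemma union_irreducible_iff_principal:
  "union_irreducible le S I \<longleftrightarrow> I \<in> principal_ideal le S ` S"
proof
  assume irr: "union_irreducible le S I"
  then have I: "I \<in> order_ideals le S" and "I \<noteq> {}"
    unfolding union_irreducible_def by auto
  then obtain m where m: "m \<in> I" and rest: "I - {m} \<in> order_ideals le S"
    using order_ideal_remove_maximal by blast
  have mS: "m \<in> S" using m order_ideals_subset[OF I] by blast
  have "I = principal_ideal le S m \<union> (I - {m})"
    using principal_ideal_subset_ideal[OF I m] self_in_principal_ideal[OF mS] m by blast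
  then have "I = principal_ideal le S m \<or> I = I - {m}"
    using irr rest principal_ideal_in_order_ideals[OF mS] unfolding union_irreducible_def by blast
  then show "I \<in> principal_ideal le S ` S" using m mS by blast
next
  assume "I \<in> principal_ideal le S ` S"
  then obtain a where a: "a \<in> S" and Ia: "I = principal_ideal le S a" by blast
  have "I = J \<or> I = K" if J: "J \<in> order_ideals le S" and K: "K \<in> order_ideals le S"
    and IJK: "I = J \<union> K" for J K
    using self_in_principal_ideal[OF a] principal_ideal_subset_ideal[OF J]
      principal_ideal_subset_ideal[OF K] Ia IJK by blast
  then show "union_irreducible le S I"
    unfolding union_irreducible_def
    using principal_ideal_in_order_ideals[OF a] self_in_principal_ideal[OF a] Ia by blast
qed

end

lemma mono_on_covers_imp_mono:
  fixes g :: "'a::order \<Rightarrow> 'b::preorder"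
  assumes P: "finite P" and step: "\<And>x y. covP P x y \<Longrightarrow> g x \<le> g y"
    and "x \<in> P" "y \<in> P" "x < y"
  shows "g x \<le> g y"
  using assms(3-)
proof (induction "card {z \<in> P. x < z \<and> z < y}" arbitrary: x y rule: less_induct)
  case less
  show ?case
  proof (cases "\<exists>z\<in>P. x < z \<and> z < y")
    case False
    then show ?thesis using step less.prems unfolding covP_def by blast
  next
    case True
    then obtain z where z: "z \<in> P" "x < z" "z < y" by blast
    have fin: "finite {w \<in> P. x < w \<and> w < y}" using P by simp
    have "card {w \<in> P. x < w \<and> w < z} < card {w \<in> P. x < w \<and> w < y}"
      by (rule psubset_card_mono[OF fin]) (use z in \<open>auto dest: less_trans\<close>)
    moreover have "card {w \<in> P. z < w \<and> w < y} < card {w \<in> P. x < w \<and> w < y}"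
      by (rule psubset_card_mono[OF fin]) (use z in \<open>auto dest: less_trans\<close>)
    ultimately show ?thesis using less z by (meson order_trans)
  qed
qed

locale weakly_consistent_restriction =
  fixes P :: "'a::order set" and R :: "'a \<Rightarrow> int set"
  assumes finite_P: "finite P" and weakly_consistent: "weakly_consistent P R"
begin

lemma finite_R: "p \<in> P \<Longrightarrow> finite (R p)"
  and R_nonempty: "p \<in> P \<Longrightarrow> R p \<noteq> {}"
  using weakly_consistent unfolding weakly_consistent_def restriction_fn_def by blast+

lemma cover_Min_le: "covP P x y \<Longrightarrow> Min (R x) \<le> Min (R y)"
  and cover_Max_le: "covP P x y \<Longrightarrow> Max (R x) \<le> Max (R y)"
  using weakly_consistent unfolding weakly_consistent_def by blast+

lemma Max_R_ge: "p \<in> P \<Longrightarrow> k \<in> R p \<Longrightarrow> k \<le> Max (R p)"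
  using finite_R by simp

lemma Rstar_iff:
  assumes "p \<in> P"
  shows "k \<in> Rstar R p \<longleftrightarrow> k \<in> R p \<and> k < Max (R p)"
  unfolding Rstar_def using Max_R_ge[OF assms, of k] by auto

lemma R_le_iff:
  assumes "p \<in> P"
  shows "R_le R p k k1 \<longleftrightarrow> k1 \<in> R p \<and> k1 \<le> k \<and> (\<forall>j\<in>R p. j \<le> k \<longrightarrow> j \<le> k1)"
proof
  let ?A = "{j \<in> R p. j \<le> k}"
  have fin: "finite ?A" using finite_R[OF assms] by simp
  {
    assume "R_le R p k k1"
    then have "k1 = Max ?A" "?A \<noteq> {}" unfolding R_le_def by auto
    then show "k1 \<in> R p \<and> k1 \<le> k \<and> (\<forall>j\<in>R p. j \<le> k \<longrightarrow> j \<le> k1)"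
      using Max_in[OF fin] Max_ge[OF fin] by auto
  next
    assume h: "k1 \<in> R p \<and> k1 \<le> k \<and> (\<forall>j\<in>R p. j \<le> k \<longrightarrow> j \<le> k1)"
    then have "Max ?A = k1" using fin by (intro Max_eqI) auto
    then show "R_le R p k k1" unfolding R_le_def using h by auto
  }
qed

lemma R_gt_iff:
  assumes "p \<in> P"
  shows "R_gt R p k k1 \<longleftrightarrow> k1 \<in> R p \<and> k < k1 \<and> (\<forall>j\<in>R p. k < j \<longrightarrow> k1 \<le> j)"
proof
  let ?A = "{j \<in> R p. k < j}"
  have fin: "finite ?A" using finite_R[OF assms] by simp
  {
    assume "R_gt R p k k1"
    then have "k1 = Min ?A" "?A \<noteq> {}" unfolding R_gt_def by auto
    then show "k1 \<in> R p \<and> k < k1 \<and> (\<forall>j\<in>R p. k < j \<longrightarrow> k1 \<le> j)"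
      using Min_in[OF fin] Min_le[OF fin] by auto
  next
    assume h: "k1 \<in> R p \<and> k < k1 \<and> (\<forall>j\<in>R p. k < j \<longrightarrow> k1 \<le> j)"
    then have "Min ?A = k1" using fin by (intro Min_eqI) auto
    then show "R_gt R p k k1" unfolding R_gt_def using h by auto
  }
qed

lemma Gamma_set_iff: "(p, k) \<in> Gamma_set P R \<longleftrightarrow> p \<in> P \<and> k \<in> R p \<and> k < Max (R p)"
  unfolding Gamma_set_def by (auto simp: Rstar_iff)

lemma finite_Gamma_set: "finite (Gamma_set P R)"
proof (rule finite_subset)
  show "Gamma_set P R \<subseteq> P \<times> (\<Union>p\<in>P. R p)"
    unfolding Gamma_set_def Rstar_def by auto
  show "finite (P \<times> (\<Union>p\<in>P. R p))"
    using finite_P finite_R by simp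
qed

lemma Gamma_le_refl: "Gamma_le P R a a"
  unfolding Gamma_le_def by simp

lemma Gamma_le_trans: "Gamma_le P R a b \<Longrightarrow> Gamma_le P R b c \<Longrightarrow> Gamma_le P R a c"
  unfolding Gamma_le_def by (rule rtrancl_trans)

lemma Gamma_cov_imp_le:
  "a \<in> Gamma_set P R \<Longrightarrow> b \<in> Gamma_set P R \<Longrightarrow> Gamma_cov P R a b \<Longrightarrow> Gamma_le P R a b"
  unfolding Gamma_le_def by (intro r_into_rtrancl) simp

lemma Gamma_cov_lex:
  assumes "p1 \<in> P" and "Gamma_cov P R (p1, k1) (p2, k2)"
  shows "p1 < p2 \<or> (p1 = p2 \<and> k2 < k1)"
  using assms unfolding Gamma_cov_def covP_def by (auto simp: R_gt_iff)

lemma Gamma_le_lex: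
  "Gamma_le P R a b \<Longrightarrow> fst a < fst b \<or> (fst a = fst b \<and> snd b \<le> snd a)"
  unfolding Gamma_le_def
proof (induction rule: rtrancl_induct)
  case (step y z)
  then have "fst y < fst z \<or> (fst y = fst z \<and> snd z < snd y)"
    using Gamma_cov_lex[of "fst y" "snd y" "fst z" "snd z"] by (auto simp: Gamma_set_def)
  with step.IH show ?case
    using order.strict_trans[of "fst a" "fst y" "fst z"] by auto
qed simp

lemma Gamma_le_antisym:
  assumes "Gamma_le P R a b" and "Gamma_le P R b a"
  shows "a = b"
proof -
  have "fst a = fst b \<and> snd b \<le> snd a" "fst b = fst a \<and> snd a \<le> snd b"
    using Gamma_le_lex[OF assms(1)] Gamma_le_lex[OF assms(2)] order.asym[of "fst a" "fst b"]
    by (metis order.irrefl)+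
  then show "a = b" by (simp add: prod_eq_iff)
qed

lemma Gamma_le_fibre:
  assumes k: "(p, k) \<in> Gamma_set P R" and k': "(p, k') \<in> Gamma_set P R" "k' \<le> k"
  shows "Gamma_le P R (p, k) (p, k')"
  using k'
proof (induction "nat (k - k')" arbitrary: k' rule: less_induct)
  case less
  show ?case
  proof (cases "k' = k")
    case True
    then show ?thesis by (simp add: Gamma_le_refl)
  next
    case False
    have p: "p \<in> P" and kR: "k \<in> R p" "k < Max (R p)" using k by (auto simp: Gamma_set_iff)
    have k'G: "(p, k') \<in> Gamma_set P R" using less.prems(1) .
    define A where "A = {j \<in> R p. k' < j}"
    have A: "finite A" "k \<in> A"
      using finite_R[OF p] kR(1) False less.prems(2) unfolding A_def by auto
    define k1 where "k1 = Min A"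
    have k1A: "k1 \<in> A" and k1k: "k1 \<le> k" using A Min_in Min_le unfolding k1_def by blast+
    have k1G: "(p, k1) \<in> Gamma_set P R"
      using k1A k1k kR p unfolding A_def Gamma_set_iff by simp
    have "R_gt R p k' k1" unfolding R_gt_def A_def[symmetric] k1_def using A by blast
    then have "Gamma_cov P R (p, k1) (p, k')" unfolding Gamma_cov_def by simp
    then have "Gamma_le P R (p, k1) (p, k')" using Gamma_cov_imp_le k1G k'G by blast
    moreover have "nat (k - k1) < nat (k - k')" using k1A less.prems(2) False unfolding A_def by simp
    then have "Gamma_le P R (p, k) (p, k1)" using less.hyps k1G k1k by blast
    ultimately show ?thesis using Gamma_le_trans by blast
  qed
qed

sublocale Gamma: finite_poset_on "Gamma_set P R" "Gamma_le P R"
  using finite_Gamma_set Gamma_le_refl Gamma_le_trans Gamma_le_antisym by unfold_locales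

abbreviation "Gamma_ideals \<equiv> order_ideals (Gamma_le P R) (Gamma_set P R)"
abbreviation "Gamma_principal \<equiv> principal_ideal (Gamma_le P R) (Gamma_set P R)"

definition ideal_of_fun :: "('a \<Rightarrow> int) \<Rightarrow> ('a \<times> int) set" where
  "ideal_of_fun f = {x \<in> Gamma_set P R. f (fst x) \<le> snd x}"

definition fun_of_ideal :: "('a \<times> int) set \<Rightarrow> 'a \<Rightarrow> int" where
  "fun_of_ideal I p =
     (if p \<in> P then Min ({k. (p, k) \<in> I \<and> (p, k) \<in> Gamma_set P R} \<union> {Max (R p)}) else 0)"

lemma fun_of_ideal_cases:
  assumes "p \<in> P"
  shows "fun_of_ideal I p = Max (R p) \<or>
    (p, fun_of_ideal I p) \<in> I \<and> (p, fun_of_ideal I p) \<in> Gamma_set P R"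
proof -
  let ?A = "{k. (p, k) \<in> I \<and> (p, k) \<in> Gamma_set P R} \<union> {Max (R p)}"
  have "finite ?A"
    using finite_subset[OF _ finite_R[OF assms]] by (auto simp: Gamma_set_iff)
  then have "Min ?A \<in> ?A" by (intro Min_in) auto
  then show ?thesis unfolding fun_of_ideal_def using assms by auto
qed

lemma fun_of_ideal_le:
  assumes "(p, k) \<in> I" and "(p, k) \<in> Gamma_set P R"
  shows "fun_of_ideal I p \<le> k"
proof -
  have p: "p \<in> P" using assms(2) by (simp add: Gamma_set_iff)
  have "finite ({k. (p, k) \<in> I \<and> (p, k) \<in> Gamma_set P R} \<union> {Max (R p)})"
    using finite_subset[OF _ finite_R[OF p]] by (auto simp: Gamma_set_iff)
  then show ?thesis unfolding fun_of_ideal_def using assms p by (auto intro: Min_le)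
qed

lemma fun_of_ideal_le_Max: "p \<in> P \<Longrightarrow> fun_of_ideal I p \<le> Max (R p)"
  using fun_of_ideal_cases[of p I] by (auto simp: Gamma_set_iff)

lemma fun_of_ideal_in_R: "p \<in> P \<Longrightarrow> fun_of_ideal I p \<in> R p"
  using fun_of_ideal_cases[of p I] Max_in[OF finite_R R_nonempty] by (auto simp: Gamma_set_iff)

lemma ideal_of_fun_in_order_ideals:
  assumes f: "f \<in> WInc P R"
  shows "ideal_of_fun f \<in> Gamma_ideals"
proof (rule order_idealsI)
  show "ideal_of_fun f \<subseteq> Gamma_set P R" unfolding ideal_of_fun_def by blast
next
  fix b a assume b: "b \<in> ideal_of_fun f" and "Gamma_le P R a b"
  then have "(a, b) \<in> {(x, y). x \<in> Gamma_set P R \<and> y \<in> Gamma_set P R \<and> Gamma_cov P R x y}\<^sup>*"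
    unfolding Gamma_le_def by simp
  then show "a \<in> ideal_of_fun f" using b
  proof (induction rule: converse_rtrancl_induct)
    case (step a c)
    obtain p1 k1 p2 k2 where ac: "a = (p1, k1)" "c = (p2, k2)" by fastforce
    have a: "p1 \<in> P" "k1 \<in> R p1" "k1 < Max (R p1)" and fk2: "f p2 \<le> k2"
      and cov: "Gamma_cov P R (p1, k1) (p2, k2)"
      using step ac by (auto simp: Gamma_set_iff ideal_of_fun_def)
    have "f p1 \<le> k1"
    proof (cases "p1 = p2")
      case True
      then show ?thesis using cov fk2 a(1) by (auto simp: Gamma_cov_def R_gt_iff covP_def)
    next
      case False
      then have "covP P p1 p2" and le: "R_le R p1 k2 k1" using cov by (auto simp: Gamma_cov_def)
      then have "f p1 \<le> f p2" using f unfolding covP_def WInc_def by blast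
      moreover have "f p1 \<in> R p1" using f a(1) unfolding WInc_def by blast
      ultimately show ?thesis using le fk2 by (auto simp: R_le_iff[OF a(1)])
    qed
    then show ?case using step ac unfolding ideal_of_fun_def by auto
  qed
qed

lemma fun_of_ideal_of_fun:
  assumes f: "f \<in> WInc P R"
  shows "fun_of_ideal (ideal_of_fun f) = f"
proof
  fix p
  show "fun_of_ideal (ideal_of_fun f) p = f p"
  proof (cases "p \<in> P")
    case False
    then show ?thesis using f unfolding fun_of_ideal_def WInc_def by simp
  next
    case p: True
    have fp: "f p \<in> R p" "f p \<le> Max (R p)" using f p Max_R_ge unfolding WInc_def by blast+
    have "f p \<le> fun_of_ideal (ideal_of_fun f) p"
      using fun_of_ideal_cases[OF p, of "ideal_of_fun f"] fp by (auto simp: ideal_of_fun_def)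
    moreover have "fun_of_ideal (ideal_of_fun f) p \<le> f p"
    proof (cases "f p = Max (R p)")
      case True
      then show ?thesis using fun_of_ideal_le_Max[OF p] by simp
    next
      case False
      then have "(p, f p) \<in> Gamma_set P R" using p fp by (auto simp: Gamma_set_iff)
      then show ?thesis by (intro fun_of_ideal_le) (auto simp: ideal_of_fun_def)
    qed
    ultimately show ?thesis by simp
  qed
qed

lemma ideal_of_fun_of_ideal:
  assumes I: "I \<in> Gamma_ideals"
  shows "ideal_of_fun (fun_of_ideal I) = I"
proof (intro equalityI subsetI)
  fix x assume "x \<in> I"
  moreover obtain p k where "x = (p, k)" by fastforce
  ultimately show "x \<in> ideal_of_fun (fun_of_ideal I)"
    using order_ideals_subset[OF I] fun_of_ideal_le unfolding ideal_of_fun_def by auto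
next
  fix x assume x: "x \<in> ideal_of_fun (fun_of_ideal I)"
  obtain p k where pk: "x = (p, k)" by fastforce
  have G: "(p, k) \<in> Gamma_set P R" and le: "fun_of_ideal I p \<le> k"
    using x pk unfolding ideal_of_fun_def by auto
  have p: "p \<in> P" and "k < Max (R p)" using G by (auto simp: Gamma_set_iff)
  then have "fun_of_ideal I p \<noteq> Max (R p)" using le by simp
  then have "(p, fun_of_ideal I p) \<in> I" "(p, fun_of_ideal I p) \<in> Gamma_set P R"
    using fun_of_ideal_cases[OF p] by auto
  moreover have "Gamma_le P R (p, k) (p, fun_of_ideal I p)"
    using Gamma_le_fibre[OF G _ le] calculation(2) .
  ultimately show "x \<in> I" using order_idealsD[OF I _ G] pk by blast
qed

lemma Gamma_cov_from_cover:
  assumes cv: "covP P p1 p2" and k2: "k2 \<in> R p2"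
    and k1: "R_le R p1 k2 k1" and k1_lt: "k1 < Max (R p1)"
  obtains k2' where "k2 \<le> k2'" and "(p2, k2') \<in> Gamma_set P R"
    and "Gamma_cov P R (p1, k1) (p2, k2')"
proof -
  have p1: "p1 \<in> P" and p2: "p2 \<in> P" using cv unfolding covP_def by blast+
  define U where "U = {k \<in> R p2. k2 \<le> k \<and> R_le R p1 k k1}"
  have U: "finite U" "k2 \<in> U" using finite_R[OF p2] k2 k1 unfolding U_def by auto
  define k2' where "k2' = Max U"
  have k2'U: "k2' \<in> U" and k2'_max: "\<And>k. k \<in> U \<Longrightarrow> k \<le> k2'"
    using Max_in[OF U(1)] Max_ge[OF U(1)] U(2) unfolding k2'_def by blast+
  have k2'_le: "R_le R p1 k2' k1" and k2'R: "k2' \<in> R p2" and "k2 \<le> k2'"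
    using k2'U unfolding U_def by auto
  have "k2' < Max (R p2)"
  proof (rule ccontr)
    assume "\<not> k2' < Max (R p2)"
    then have "Max (R p1) \<le> k2'" using cover_Max_le[OF cv] by simp
    then have "Max (R p1) \<le> k1"
      using k2'_le Max_in[OF finite_R[OF p1] R_nonempty[OF p1]] by (auto simp: R_le_iff[OF p1])
    with k1_lt show False by simp
  qed
  then have "(p2, k2') \<in> Gamma_set P R" using p2 k2'R by (simp add: Gamma_set_iff)
  moreover have "Gamma_cov P R (p1, k1) (p2, k2')"
    using cv k2'_le k2'_max \<open>k2 \<le> k2'\<close> unfolding Gamma_cov_def U_def by force
  ultimately show thesis using that \<open>k2 \<le> k2'\<close> by blast
qed

lemma fun_of_ideal_cover_mono:
  assumes I: "I \<in> Gamma_ideals" and cv: "covP P p1 p2"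
  shows "fun_of_ideal I p1 \<le> fun_of_ideal I p2"
proof -
  have p1: "p1 \<in> P" and p2: "p2 \<in> P" using cv unfolding covP_def by blast+
  consider "fun_of_ideal I p2 = Max (R p2)"
    | "(p2, fun_of_ideal I p2) \<in> I" "(p2, fun_of_ideal I p2) \<in> Gamma_set P R"
    using fun_of_ideal_cases[OF p2] by blast
  then show ?thesis
  proof cases
    case 1
    then show ?thesis using order_trans[OF fun_of_ideal_le_Max[OF p1] cover_Max_le[OF cv]] by simp
  next
    case 2
    define k2 where "k2 = fun_of_ideal I p2"
    have k2I: "(p2, k2) \<in> I" and k2G: "(p2, k2) \<in> Gamma_set P R" using 2 unfolding k2_def by auto
    have "k2 \<in> R p2" using k2G by (simp add: Gamma_set_iff)
    then have "Min (R p1) \<le> k2"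
      using order_trans[OF cover_Min_le[OF cv] Min_le[OF finite_R[OF p2]]] by blast
    then have "{j \<in> R p1. j \<le> k2} \<noteq> {}"
      using Min_in[OF finite_R[OF p1] R_nonempty[OF p1]] by blast
    then obtain k1 where k1: "R_le R p1 k2 k1" unfolding R_le_def by blast
    then have k1R: "k1 \<in> R p1" and "k1 \<le> k2" by (auto simp: R_le_iff[OF p1])
    have "fun_of_ideal I p1 \<le> k1"
    proof (cases "k1 < Max (R p1)")
      case False
      then show ?thesis using fun_of_ideal_le_Max[OF p1] Max_R_ge[OF p1 k1R] by simp
    next
      case True
      obtain k2' where "k2 \<le> k2'" and k2'G: "(p2, k2') \<in> Gamma_set P R"
        and cov: "Gamma_cov P R (p1, k1) (p2, k2')"
        using Gamma_cov_from_cover[OF cv _ k1 True] k2G by (auto simp: Gamma_set_iff)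
      have k1G: "(p1, k1) \<in> Gamma_set P R" using p1 k1R True by (simp add: Gamma_set_iff)
      have "(p2, k2') \<in> I"
        using order_idealsD[OF I k2I k2'G Gamma_le_fibre[OF k2'G k2G \<open>k2 \<le> k2'\<close>]] .
      then have "(p1, k1) \<in> I"
        using order_idealsD[OF I _ k1G Gamma_cov_imp_le[OF k1G k2'G cov]] by blast
      then show ?thesis using fun_of_ideal_le k1G by blast
    qed
    then show ?thesis using \<open>k1 \<le> k2\<close> unfolding k2_def by simp
  qed
qed

lemma fun_of_ideal_in_WInc:
  assumes I: "I \<in> Gamma_ideals"
  shows "fun_of_ideal I \<in> WInc P R"
  unfolding WInc_def
proof (intro CollectI conjI ballI allI impI)
  show "fun_of_ideal I p \<in> R p" if "p \<in> P" for p
    using fun_of_ideal_in_R[OF that] .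
  show "fun_of_ideal I p1 \<le> fun_of_ideal I p2" if "p1 \<in> P" "p2 \<in> P" "p1 < p2" for p1 p2
    using mono_on_covers_imp_mono[OF finite_P fun_of_ideal_cover_mono[OF I] that] .
  show "fun_of_ideal I p = 0" if "p \<notin> P" for p
    using that unfolding fun_of_ideal_def by simp
qed

lemma bij_betw_fun_of_ideal:
  "bij_betw fun_of_ideal Gamma_ideals (WInc P R)"
  by (rule bij_betw_byWitness[where f' = ideal_of_fun])
    (auto simp: ideal_of_fun_of_ideal fun_of_ideal_of_fun fun_of_ideal_in_WInc
      ideal_of_fun_in_order_ideals)

lemma ideal_of_fun_inject:
  "f \<in> WInc P R \<Longrightarrow> g \<in> WInc P R \<Longrightarrow> ideal_of_fun f = ideal_of_fun g \<longleftrightarrow> f = g"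
  by (metis fun_of_ideal_of_fun)

lemma wle_iff_ideal_of_fun_subset:
  assumes f: "f \<in> WInc P R" and g: "g \<in> WInc P R"
  shows "wle P f g \<longleftrightarrow> ideal_of_fun g \<subseteq> ideal_of_fun f"
proof
  assume "wle P f g"
  then show "ideal_of_fun g \<subseteq> ideal_of_fun f"
    unfolding wle_def ideal_of_fun_def Gamma_set_def by force
next
  assume sub: "ideal_of_fun g \<subseteq> ideal_of_fun f"
  show "wle P f g" unfolding wle_def
  proof
    fix p assume p: "p \<in> P"
    have fp: "f p \<in> R p" and gp: "g p \<in> R p" using f g p unfolding WInc_def by blast+
    show "f p \<le> g p"
    proof (cases "g p < Max (R p)")
      case True
      then have "(p, g p) \<in> ideal_of_fun g" using p gp by (simp add: ideal_of_fun_def Gamma_set_iff)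
      then show ?thesis using sub unfolding ideal_of_fun_def by auto
    next
      case False
      then show ?thesis using Max_R_ge[OF p fp] by simp
    qed
  qed
qed

lemma ideal_of_fun_wmeet: "ideal_of_fun (wmeet f g) = ideal_of_fun f \<union> ideal_of_fun g"
  unfolding ideal_of_fun_def wmeet_def by auto

lemma wmeet_in_WInc:
  assumes f: "f \<in> WInc P R" and g: "g \<in> WInc P R"
  shows "wmeet f g \<in> WInc P R"
  unfolding WInc_def wmeet_def
proof (intro CollectI conjI ballI allI impI)
  show "min (f p) (g p) \<in> R p" if "p \<in> P" for p
    using f g that unfolding WInc_def min_def by simp
  show "min (f p1) (g p1) \<le> min (f p2) (g p2)" if "p1 \<in> P" "p2 \<in> P" "p1 < p2" for p1 p2
    using f g that unfolding WInc_def by (intro min.mono) blast+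
  show "min (f p) (g p) = 0" if "p \<notin> P" for p
    using f g that unfolding WInc_def by simp
qed

lemma is_top_iff_ideal_of_fun_empty:
  assumes f: "f \<in> WInc P R"
  shows "is_top (wle P) (WInc P R) f \<longleftrightarrow> ideal_of_fun f = {}"
proof
  assume "is_top (wle P) (WInc P R) f"
  moreover have top: "fun_of_ideal {} \<in> WInc P R"
    using fun_of_ideal_in_WInc[OF empty_in_order_ideals] .
  ultimately have "ideal_of_fun f \<subseteq> ideal_of_fun (fun_of_ideal {})"
    using wle_iff_ideal_of_fun_subset[OF top f] unfolding is_top_def by blast
  then show "ideal_of_fun f = {}"
    using ideal_of_fun_of_ideal[OF empty_in_order_ideals] by simp
next
  assume "ideal_of_fun f = {}"
  then show "is_top (wle P) (WInc P R) f"
    using f wle_iff_ideal_of_fun_subset unfolding is_top_def by auto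
qed

lemma meet_irreducible_iff_union_irreducible:
  assumes f: "f \<in> WInc P R"
  shows "f \<in> meet_irreducibles P R \<longleftrightarrow>
    union_irreducible (Gamma_le P R) (Gamma_set P R) (ideal_of_fun f)"
proof -
  have "(\<forall>y\<in>WInc P R. \<forall>z\<in>WInc P R. f = wmeet y z \<longrightarrow> f = y \<or> f = z) \<longleftrightarrow>
    (\<forall>J\<in>Gamma_ideals. \<forall>K\<in>Gamma_ideals.
       ideal_of_fun f = J \<union> K \<longrightarrow> ideal_of_fun f = J \<or> ideal_of_fun f = K)"
  proof (intro iffI ballI impI)
    fix J K assume irr: "\<forall>y\<in>WInc P R. \<forall>z\<in>WInc P R. f = wmeet y z \<longrightarrow> f = y \<or> f = z"
      and J: "J \<in> Gamma_ideals" and K: "K \<in> Gamma_ideals"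
      and JK: "ideal_of_fun f = J \<union> K"
    let ?y = "fun_of_ideal J" and ?z = "fun_of_ideal K"
    have yz: "?y \<in> WInc P R" "?z \<in> WInc P R" using fun_of_ideal_in_WInc J K by blast+
    have "ideal_of_fun (wmeet ?y ?z) = ideal_of_fun f"
      using JK ideal_of_fun_wmeet ideal_of_fun_of_ideal J K by simp
    then have "f = wmeet ?y ?z" using ideal_of_fun_inject[OF f wmeet_in_WInc[OF yz]] by simp
    then have "f = ?y \<or> f = ?z" using irr yz by blast
    then show "ideal_of_fun f = J \<or> ideal_of_fun f = K"
      using ideal_of_fun_of_ideal J K by auto
  next
    fix y z assume irr: "\<forall>J\<in>Gamma_ideals. \<forall>K\<in>Gamma_ideals.
       ideal_of_fun f = J \<union> K \<longrightarrow> ideal_of_fun f = J \<or> ideal_of_fun f = K"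
      and y: "y \<in> WInc P R" and z: "z \<in> WInc P R" and fyz: "f = wmeet y z"
    have "ideal_of_fun f = ideal_of_fun y \<union> ideal_of_fun z"
      using fyz ideal_of_fun_wmeet by simp
    then have "ideal_of_fun f = ideal_of_fun y \<or> ideal_of_fun f = ideal_of_fun z"
      using irr ideal_of_fun_in_order_ideals[OF y] ideal_of_fun_in_order_ideals[OF z] by blast
    then show "f = y \<or> f = z" using ideal_of_fun_inject[OF f y] ideal_of_fun_inject[OF f z] by blast
  qed
  moreover have "f \<in> WInc P R \<and> \<not> is_top (wle P) (WInc P R) f \<longleftrightarrow> ideal_of_fun f \<noteq> {}"
    using f is_top_iff_ideal_of_fun_empty[OF f] by simp
  ultimately show ?thesis
    using f ideal_of_fun_in_order_ideals[OF f]
    unfolding meet_irreducibles_def union_irreducible_def mem_Collect_eq by argo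
qed

lemma meet_irreducibles_eq_principal_ideals:
  "meet_irreducibles P R = fun_of_ideal ` Gamma_principal ` Gamma_set P R"
proof (intro equalityI subsetI)
  fix f assume f: "f \<in> meet_irreducibles P R"
  then have fW: "f \<in> WInc P R" unfolding meet_irreducibles_def by blast
  then obtain a where "a \<in> Gamma_set P R" and "ideal_of_fun f = Gamma_principal a"
    using f meet_irreducible_iff_union_irreducible Gamma.union_irreducible_iff_principal by blast
  then show "f \<in> fun_of_ideal ` Gamma_principal ` Gamma_set P R"
    using fun_of_ideal_of_fun[OF fW] by force
next
  fix f assume "f \<in> fun_of_ideal ` Gamma_principal ` Gamma_set P R"
  then obtain a where a: "a \<in> Gamma_set P R" and f: "f = fun_of_ideal (Gamma_principal a)"
    by blast
  have I: "Gamma_principal a \<in> Gamma_ideals"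
    using Gamma.principal_ideal_in_order_ideals[OF a] .
  have "union_irreducible (Gamma_le P R) (Gamma_set P R) (ideal_of_fun f)"
    using Gamma.union_irreducible_iff_principal a ideal_of_fun_of_ideal[OF I] f by blast
  then show "f \<in> meet_irreducibles P R"
    using meet_irreducible_iff_union_irreducible fun_of_ideal_in_WInc[OF I] f by blast
qed

lemma Gamma_le_iff_wle_principal:
  assumes a: "a \<in> Gamma_set P R" and b: "b \<in> Gamma_set P R"
  shows "Gamma_le P R a b \<longleftrightarrow>
    wle P (fun_of_ideal (Gamma_principal b)) (fun_of_ideal (Gamma_principal a))"
proof -
  have "Gamma_principal a \<in> Gamma_ideals" "Gamma_principal b \<in> Gamma_ideals"
    using Gamma.principal_ideal_in_order_ideals a b by blast+
  then show ?thesis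
    by (simp add: Gamma.principal_ideal_subset_iff[OF a b] wle_iff_ideal_of_fun_subset
        fun_of_ideal_in_WInc ideal_of_fun_of_ideal)
qed

lemma inj_on_fun_of_principal_ideal:
  "inj_on (fun_of_ideal \<circ> Gamma_principal) (Gamma_set P R)"
proof (rule comp_inj_on[OF Gamma.inj_on_principal_ideal])
  have "Gamma_principal ` Gamma_set P R \<subseteq> Gamma_ideals"
    using Gamma.principal_ideal_in_order_ideals by blast
  then show "inj_on fun_of_ideal (Gamma_principal ` Gamma_set P R)"
    using inj_on_subset[OF bij_betw_imp_inj_on[OF bij_betw_fun_of_ideal]] by blast
qed

end

theorem theorem2p25:
  fixes P :: "'a::order set" and R :: "'a \<Rightarrow> int set"
  assumes "finite P"
    and "weakly_consistent P R"
  shows "(\<exists>\<phi>. bij_betw \<phi> (Gamma_set P R) (meet_irreducibles P R) \<and>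
            (\<forall>a\<in>Gamma_set P R. \<forall>b\<in>Gamma_set P R.
               Gamma_le P R a b \<longleftrightarrow> wle P (\<phi> b) (\<phi> a)))
       \<and> (\<exists>\<psi>. bij_betw \<psi> (order_ideals (Gamma_le P R) (Gamma_set P R)) (WInc P R))"
proof -
  interpret weakly_consistent_restriction P R
    using assms by unfold_locales
  have "bij_betw (fun_of_ideal \<circ> Gamma_principal) (Gamma_set P R) (meet_irreducibles P R)"
    unfolding bij_betw_def
    using inj_on_fun_of_principal_ideal meet_irreducibles_eq_principal_ideals
    by (simp add: image_comp)
  then show ?thesis
    using Gamma_le_iff_wle_principal bij_betw_fun_of_ideal by fastforce
qed

end
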